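(* Consider a closed tandem queueing system of $n\ge1$ single-server nodes $1,\dots,n$ with initial buffer contents $r_1,\dots,r_n\in\{0,1,2,\dots\}$, not all equal to $0$, and service times $\tau_{ik}>0$. Let the departure epochs $d_i(k)\in\underline{\mathbb R}$, $k\ge1$, satisfy for all $i$ and $k\ge1$ $$d_i(k)=\tau_{ik}\otimes a_i(k)\oplus\tau_{ik}\otimes d_i(k-1),\qquad a_1(k)=d_n(k-r_1),\quad a_i(k)=d_{i-1}(k-r_i)\ (i=2,\dots,n),$$ with $d_i(0)=0$ and $d_i(k)=\varepsilon$ for $k<0$. Let $M=\max_i r_i\ (\ge1)$, and for $m\ge0$ let $G_m=(g^m_{ij})$ be the $n\times n$ matrix with $g^m_{ij}=0$ if ($j=i+1\le n$ and $r_j=m$) or ($i=n$, $j=1$ and $r_1=m$), and $g^m_{ij}=\varepsilon$ otherwise (for $n=1$ this means $g^m_{11}=0$ iff $r_1=m$). Then the graph associated with $G_0$ is acyclic, and, with $p$ the length of its longest path and $\mathcal T_k=\mathrm{diag}(\tau_{1k},\dots,\tau_{nk})$, for all $k\ge1$ $$\mathbf d(k)=\bigoplus_{m=1}^{M}T_m(k)\otimes\mathbf d(k-m),$$ where $T_1(k)=(E\oplus\mathcal T_k\otimes G_0^T)^p\otimes\mathcal T_k\otimes(E\oplus G_1^T)$ and $T_m(k)=(E\oplus\mathcal T_k\otimes G_0^T)^p\otimes\mathcal T_k\otimes G_m^T$ for $m=2,\dots,M$.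
   Context: Max-plus algebra: on $\underline{\mathbb R}=\mathbb R\cup\{\varepsilon\}$ with $\varepsilon=-\infty$, define $x\oplus y=\max(x,y)$ and $x\otimes y=x+y$ (with $x\otimes\varepsilon=\varepsilon\otimes x=\varepsilon$). For matrices, $(X\oplus Y)_{ij}=x_{ij}\oplus y_{ij}$, $(X\otimes Y)_{ij}=\bigoplus_k x_{ik}\otimes y_{kj}$; matrix–vector products likewise; $\bigoplus$ denotes iterated $\oplus$ (maximum). $E$ is the $n\times n$ identity (diagonal $0$, off-diagonal $\varepsilon$); $X^0=E$, $X^q=X\otimes X^{q-1}$; $X^T$ is the transpose. The graph associated with an $n\times n$ matrix $X$ has vertices $\{1,\dots,n\}$ and an arc $(i,j)$ iff $x_{ij}\ne\varepsilon$ (loops count as cycles); path length = number of arcs. $\mathbf d(k)=(d_1(k),\dots,d_n(k))^T$. *)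

theory Defs
  imports "HOL-Library.Extended_Real"
begin

text \<open>Max-plus algebra over ereal: epsilon = -infinity, oplus = max, otimes = +.
  n x n matrices are functions nat => nat => ereal, indices 1..n.\<close>

type_synonym mpmat = "nat \<Rightarrow> nat \<Rightarrow> ereal"
type_synonym mpvec = "nat \<Rightarrow> ereal"

definition mp_add :: "mpmat \<Rightarrow> mpmat \<Rightarrow> mpmat" where
  "mp_add A B = (\<lambda>i j. max (A i j) (B i j))"

definition mp_mult :: "nat \<Rightarrow> mpmat \<Rightarrow> mpmat \<Rightarrow> mpmat" where
  "mp_mult n A B = (\<lambda>i j. SUP l\<in>{1..n}. A i l + B l j)"

definition mp_mv :: "nat \<Rightarrow> mpmat \<Rightarrow> mpvec \<Rightarrow> mpvec" where
  "mp_mv n A x = (\<lambda>i. SUP l\<in>{1..n}. A i l + x l)"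

definition mp_id :: mpmat where
  "mp_id = (\<lambda>i j. if i = j then 0 else -\<infinity>)"

primrec mp_pow :: "nat \<Rightarrow> mpmat \<Rightarrow> nat \<Rightarrow> mpmat" where
  "mp_pow n A 0 = mp_id"
| "mp_pow n A (Suc q) = mp_mult n A (mp_pow n A q)"

definition mp_transpose :: "mpmat \<Rightarrow> mpmat" where
  "mp_transpose A = (\<lambda>i j. A j i)"

definition mp_diag :: "mpvec \<Rightarrow> mpmat" where
  "mp_diag v = (\<lambda>i j. if i = j then v i else -\<infinity>)"

definition mp_graph :: "nat \<Rightarrow> mpmat \<Rightarrow> (nat \<times> nat) set" where
  "mp_graph n A = {(i, j). i \<in> {1..n} \<and> j \<in> {1..n} \<and> A i j \<noteq> -\<infinity>}"

definition longest_path_len :: "(nat \<times> nat) set \<Rightarrow> nat" where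
  "longest_path_len R = Max {m. \<exists>i j. (i, j) \<in> R ^^ m}"

definition tandem_G :: "nat \<Rightarrow> (nat \<Rightarrow> nat) \<Rightarrow> nat \<Rightarrow> mpmat" where
  "tandem_G n r m = (\<lambda>i j. if (j = i + 1 \<and> j \<le> n \<and> r j = m) \<or> (i = n \<and> j = 1 \<and> r 1 = m)
                           then 0 else -\<infinity>)"

end

theory Submission
  imports Defs
begin

text \<open>
  Write upstream(j) for the node feeding
  node j (j - 1, and n for j = 1).  The transposed matrix G_m^T has its only
  possible finite entry in row j at column upstream(j), present iff r_j = m, so the
  recursion reads d(k) = max(c(k), D(k) G_0^T d(k)) (max-plus products) with D(k) = diag(tau_k) and c(k)
  collecting the terms with lags 1..M.  Multiplying by max(E, D(k) G_0^T) performs one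
  step of propagation along the arcs of the graph of G_0, which are the arcs
  upstream(j) -> j with r_j = 0.  Since some r_i is nonzero, every walk in this graph
  has fewer than n arcs, so the graph is acyclic, and every backward chain of
  zero-buffer nodes breaks after at most p steps, p the longest path length.
  Hence p propagation steps starting from c(k) = D(k) (sup_m C_m d(k - m)) reach d(k).
\<close>

text \<open>Over a finite nonempty index set the supremum is a maximum, so max-plus
  multiplication distributes over it even in the presence of infinite values.\<close>
lemma add_SUP_finite:
  fixes f :: "'a \<Rightarrow> ereal"
  assumes "finite S" "S \<noteq> {}"
  shows "a + (SUP x\<in>S. f x) = (SUP x\<in>S. a + f x)"
proof -
  have "mono ((+) a)" by (rule monoI) (rule add_left_mono)
  then have "a + Max (f ` S) = Max ((+) a ` f ` S)"
    using assms by (simp add: mono_Max_commute)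
  then show ?thesis using assms by (simp add: cSup_eq_Max image_comp comp_def)
qed

lemma SUP_add_finite:
  fixes f :: "'a \<Rightarrow> ereal"
  assumes "finite S" "S \<noteq> {}"
  shows "(SUP x\<in>S. f x) + a = (SUP x\<in>S. f x + a)"
  using add_SUP_finite[OF assms, of a f] by (simp add: add.commute)

text \<open>Addition distributes over max in ereal (which is not cancellative, so the
  corresponding library facts do not apply).\<close>
lemma max_add_ereal: "max (x::ereal) y + z = max (x + z) (y + z)"
  by (simp add: max_def add_right_mono antisym)

lemma add_max_ereal: "(z::ereal) + max x y = max (z + x) (z + y)"
  using max_add_ereal[of x y z] by (simp add: add.commute)

lemma mv_add: "mp_mv n (mp_add A B) w i = max (mp_mv n A w i) (mp_mv n B w i)"
  unfolding mp_mv_def mp_add_def max_add_ereal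
  by (simp only: flip: sup_max) (rule Complete_Lattices.SUP_sup_distrib[symmetric])

text \<open>A row whose only candidate entry sits at column j picks out that component,
  provided the vector never takes the value \<infinity> (which would absorb -\<infinity>).\<close>
lemma mv_single_entry:
  assumes row: "\<And>l. l \<in> {1..n} \<Longrightarrow> A i l = (if l = j then a else -\<infinity>)"
    and j: "j \<in> {1..n}" and w: "\<forall>l\<in>{1..n}. w l \<noteq> \<infinity>"
  shows "mp_mv n A w i = a + w j"
proof (rule antisym)
  have "A i l + w l \<le> a + w j" if "l \<in> {1..n}" for l
    using row[OF that] w that by (cases "w l") auto
  then show "mp_mv n A w i \<le> a + w j" unfolding mp_mv_def by (rule SUP_least)
  show "a + w j \<le> mp_mv n A w i" unfolding mp_mv_def using row[OF j] j by (auto intro: SUP_upper2)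
qed

lemma mv_mult:
  assumes "n \<ge> 1"
  shows "mp_mv n (mp_mult n A B) w i = mp_mv n A (mp_mv n B w) i"
proof -
  have "mp_mv n (mp_mult n A B) w i = (SUP l\<in>{1..n}. SUP l'\<in>{1..n}. A i l' + B l' l + w l)"
    unfolding mp_mv_def mp_mult_def using assms by (simp add: SUP_add_finite)
  also have "\<dots> = (SUP l'\<in>{1..n}. SUP l\<in>{1..n}. A i l' + (B l' l + w l))"
    by (subst SUP_commute) (simp add: ac_simps)
  also have "\<dots> = mp_mv n A (mp_mv n B w) i"
    unfolding mp_mv_def using assms by (simp add: add_SUP_finite)
  finally show ?thesis .
qed

lemma mv_SUP:
  assumes "n \<ge> 1" "finite S" "S \<noteq> {}"
  shows "(SUP m\<in>S. mp_mv n A (w m) i) = mp_mv n A (\<lambda>j. SUP m\<in>S. w m j) i"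
  unfolding mp_mv_def using assms by (simp add: add_SUP_finite SUP_commute[of _ S])

lemma mv_cong:
  "(\<And>l. l \<in> {1..n} \<Longrightarrow> w l = w' l) \<Longrightarrow> mp_mv n A w i = mp_mv n A w' i"
  unfolding mp_mv_def by (intro SUP_cong) auto

lemma mv_id:
  assumes "i \<in> {1..n}" "\<forall>l\<in>{1..n}. w l \<noteq> \<infinity>"
  shows "mp_mv n mp_id w i = w i"
  using mv_single_entry[of n mp_id i i 0 w] assms by (simp add: mp_id_def)

lemma mv_diag:
  assumes "i \<in> {1..n}" "\<forall>l\<in>{1..n}. w l \<noteq> \<infinity>"
  shows "mp_mv n (mp_diag v) w i = v i + w i"
  using mv_single_entry[of n "mp_diag v" i i "v i" w] assms by (simp add: mp_diag_def)

definition upstream :: "nat \<Rightarrow> nat \<Rightarrow> nat" where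
  "upstream n i = (if i = 1 then n else i - 1)"

abbreviation zero_graph :: "nat \<Rightarrow> (nat \<Rightarrow> nat) \<Rightarrow> (nat \<times> nat) set" where
  "zero_graph n r \<equiv> mp_graph n (tandem_G n r 0)"

lemma upstream_range: "i \<in> {1..n} \<Longrightarrow> upstream n i \<in> {1..n}"
  unfolding upstream_def by auto

lemma upstream_iter_range: "i \<in> {1..n} \<Longrightarrow> (upstream n ^^ u) i \<in> {1..n}"
  by (induction u) (simp_all only: funpow.simps comp_apply id_apply upstream_range)

lemma G_transpose_entry:
  assumes "i \<in> {1..n}" "l \<in> {1..n}"
  shows "mp_transpose (tandem_G n r m) i l = (if l = upstream n i then (if r i = m then 0 else -\<infinity>) else -\<infinity>)"
  using assms unfolding mp_transpose_def tandem_G_def upstream_def by auto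

lemma mv_G_transpose:
  assumes "i \<in> {1..n}" "\<forall>l\<in>{1..n}. w l \<noteq> \<infinity>"
  shows "mp_mv n (mp_transpose (tandem_G n r m)) w i = (if r i = m then w (upstream n i) else -\<infinity>)"
proof -
  have "mp_mv n (mp_transpose (tandem_G n r m)) w i = (if r i = m then 0 else -\<infinity>) + w (upstream n i)"
    using assms by (intro mv_single_entry G_transpose_entry upstream_range)
  then show ?thesis using assms(2) upstream_range[OF assms(1)] by auto
qed

lemma zero_graph_arc:
  assumes "n \<ge> 1"
  shows "(a, b) \<in> zero_graph n r \<longleftrightarrow> b \<in> {1..n} \<and> a = upstream n b \<and> r b = 0"
  using assms unfolding mp_graph_def tandem_G_def upstream_def by auto

lemma zero_graph_walk:
  assumes "n \<ge> 1" "b \<in> {1..n}"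
  shows "(a, b) \<in> zero_graph n r ^^ m \<longleftrightarrow>
    a = (upstream n ^^ m) b \<and> (\<forall>u<m. r ((upstream n ^^ u) b) = 0)"
proof (induction m arbitrary: a)
  case 0
  then show ?case by simp
next
  case (Suc m)
  have "(a, b) \<in> zero_graph n r ^^ Suc m \<longleftrightarrow> (\<exists>c. (a, c) \<in> zero_graph n r \<and> (c, b) \<in> zero_graph n r ^^ m)"
    using relpow_Suc_D2 relpow_Suc_I2 by metis
  also have "\<dots> \<longleftrightarrow> a = upstream n ((upstream n ^^ m) b) \<and> r ((upstream n ^^ m) b) = 0
      \<and> (\<forall>u<m. r ((upstream n ^^ u) b) = 0)"
    using Suc.IH zero_graph_arc[OF assms(1)] upstream_iter_range[OF assms(2)] by auto
  also have "\<dots> \<longleftrightarrow> a = (upstream n ^^ Suc m) b \<and> (\<forall>u<Suc m. r ((upstream n ^^ u) b) = 0)"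
    by (auto simp: less_Suc_eq)
  finally show ?case .
qed

lemma upstream_iter_below: "u < i \<Longrightarrow> (upstream n ^^ u) i = i - u"
  by (induction u) (auto simp: upstream_def)

lemma upstream_iter_covers:
  assumes "i \<in> {1..n}" "j \<in> {1..n}"
  shows "\<exists>u<n. (upstream n ^^ u) i = j"
proof (cases "j \<le> i")
  case True
  then show ?thesis using assms upstream_iter_below[of "i - j" i n] by (intro exI[of _ "i - j"]) auto
next
  case False
  obtain k where k: "i = Suc k" using assms(1) by (cases i) auto
  then have "(upstream n ^^ i) i = upstream n ((upstream n ^^ k) i)" by simp
  also have "\<dots> = n" using k upstream_iter_below[of k i n] by (simp add: upstream_def)
  finally have "(upstream n ^^ i) i = n" .
  moreover have "(upstream n ^^ (n - j)) n = j"
    using assms(2) upstream_iter_below[of "n - j" n n] by auto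
  ultimately have "(upstream n ^^ (n - j + i)) i = j" by (simp add: funpow_add)
  then show ?thesis using False assms by (intro exI[of _ "n - j + i"]) auto
qed

text \<open>Every walk has fewer than n arcs: a walk of n or more arcs would pass
  through every node, forcing all buffers to be empty.\<close>
lemma zero_graph_walk_short:
  assumes "n \<ge> 1" "\<exists>i\<in>{1..n}. r i \<noteq> 0" "(a, b) \<in> zero_graph n r ^^ m"
  shows "m < n"
proof (rule ccontr)
  assume "\<not> m < n"
  then obtain m' where m': "m = Suc m'" using assms(1) by (cases m) auto
  then have b: "b \<in> {1..n}" using assms(3) zero_graph_arc[OF assms(1)] by auto
  then have chain: "\<forall>u<m. r ((upstream n ^^ u) b) = 0"
    using zero_graph_walk[OF assms(1) b] assms(3) by blast
  have "r j = 0" if j: "j \<in> {1..n}" for j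
  proof -
    obtain u where "u < n" "(upstream n ^^ u) b = j" using upstream_iter_covers[OF b j] by blast
    then show ?thesis using chain \<open>\<not> m < n\<close> by auto
  qed
  then show False using assms(2) by auto
qed

text \<open>Consequently the graph of G_0 has no cycles (a cycle could be pumped up).\<close>
lemma zero_graph_acyclic:
  assumes "n \<ge> 1" "\<exists>i\<in>{1..n}. r i \<noteq> 0"
  shows "acyclic (zero_graph n r)"
  unfolding acyclic_def
proof (intro allI notI)
  fix x assume "(x, x) \<in> (zero_graph n r)\<^sup>+"
  then obtain m where m: "m > 0" "(x, x) \<in> zero_graph n r ^^ m" using trancl_power by blast
  have "(x, x) \<in> zero_graph n r ^^ (m * q)" for q
  proof (induction q)
    case (Suc q)
    then show ?case using m(2) relpow_add[of m "m * q" "zero_graph n r"] by auto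
  qed simp
  then have "m * n < n" by (rule zero_graph_walk_short[OF assms])
  then show False using m by simp
qed

lemma zero_chain_bounded:
  assumes "n \<ge> 1" "\<exists>i\<in>{1..n}. r i \<noteq> 0" "i \<in> {1..n}"
  shows "\<exists>u\<le>longest_path_len (zero_graph n r). r ((upstream n ^^ u) i) \<noteq> 0"
proof (rule ccontr)
  let ?p = "longest_path_len (zero_graph n r)"
  let ?lengths = "{m. \<exists>a b. (a, b) \<in> zero_graph n r ^^ m}"
  assume "\<not> ?thesis"
  then have chain: "\<forall>u<Suc ?p. r ((upstream n ^^ u) i) = 0" by (simp add: less_Suc_eq_le)
  have "((upstream n ^^ Suc ?p) i, i) \<in> zero_graph n r ^^ Suc ?p"
    by (subst zero_graph_walk[OF assms(1,3)]) (use chain in blast)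
  then have "Suc ?p \<in> ?lengths" by blast
  moreover have "?lengths \<subseteq> {..<n}" using zero_graph_walk_short[OF assms(1,2)] by blast
  then have "finite ?lengths" by (rule finite_subset) simp
  ultimately have "Suc ?p \<le> ?p" unfolding longest_path_len_def by (rule Max_ge[rotated])
  then show False by simp
qed

text \<open>Iteration for an abstract fixed-point equation x = max(c, t + G_0^T x).\<close>
context
  fixes n :: nat and r :: "nat \<Rightarrow> nat" and t c x :: "nat \<Rightarrow> ereal"
    and V :: "nat \<Rightarrow> nat \<Rightarrow> ereal"
  assumes x_fix: "\<And>j. j \<in> {1..n} \<Longrightarrow>
      x j = max (c j) (if r j = 0 then t j + x (upstream n j) else -\<infinity>)"
    and x_fin: "\<And>j. j \<in> {1..n} \<Longrightarrow> x j \<noteq> \<infinity>"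
    and V_0: "\<And>j. j \<in> {1..n} \<Longrightarrow> V 0 j = c j"
    and V_Suc: "\<And>s j. (\<And>l. l \<in> {1..n} \<Longrightarrow> V s l \<noteq> \<infinity>) \<Longrightarrow> j \<in> {1..n} \<Longrightarrow>
      V (Suc s) j = max (V s j) (if r j = 0 then t j + V s (upstream n j) else -\<infinity>)"
begin

lemma iterate_le_fixpoint: "j \<in> {1..n} \<Longrightarrow> V s j \<le> x j"
proof (induction s arbitrary: j)
  case 0
  then show ?case using V_0 x_fix by simp
next
  case (Suc s)
  have "V s l \<noteq> \<infinity>" if "l \<in> {1..n}" for l
    using Suc.IH[OF that] x_fin[OF that] by auto
  then have "V (Suc s) j = max (V s j) (if r j = 0 then t j + V s (upstream n j) else -\<infinity>)"
    using V_Suc Suc.prems by blast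
  also have "\<dots> \<le> max (x j) (if r j = 0 then t j + x (upstream n j) else -\<infinity>)"
  proof (rule max.mono)
    show "V s j \<le> x j" using Suc.IH[OF Suc.prems] .
    show "(if r j = 0 then t j + V s (upstream n j) else -\<infinity>)
        \<le> (if r j = 0 then t j + x (upstream n j) else -\<infinity>)"
      using Suc.IH[OF upstream_range[OF Suc.prems]] by (simp add: add_left_mono)
  qed
  also have "\<dots> = x j" using x_fix[OF Suc.prems] by auto
  finally show ?case .
qed

text \<open>Since the iterates stay below the finite x, the step equation always applies.\<close>
lemma iterate_step:
  assumes "j \<in> {1..n}"
  shows "V (Suc s) j = max (V s j) (if r j = 0 then t j + V s (upstream n j) else -\<infinity>)"
proof (rule V_Suc[OF _ assms])
  fix l assume "l \<in> {1..n}"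
  then show "V s l \<noteq> \<infinity>" using iterate_le_fixpoint[of l s] x_fin[of l] by auto
qed

lemma iterate_ge_start: "j \<in> {1..n} \<Longrightarrow> c j \<le> V s j"
proof (induction s)
  case (Suc s)
  then show ?case by (simp add: iterate_step le_max_iff_disj)
qed (simp add: V_0)

lemma iterate_exact:
  "j \<in> {1..n} \<Longrightarrow> \<exists>u\<le>s. r ((upstream n ^^ u) j) \<noteq> 0 \<Longrightarrow> V s j = x j"
proof (induction s arbitrary: j)
  case 0
  then show ?case using V_0 x_fix by simp
next
  case (Suc s)
  have "x j \<le> V (Suc s) j"
  proof (cases "r j = 0")
    case False
    then have "\<exists>u\<le>s. r ((upstream n ^^ u) j) \<noteq> 0" by (intro exI[of _ 0]) simp
    then have "V s j = x j" using Suc.IH[OF Suc.prems(1)] by blast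
    then show ?thesis using iterate_step[OF Suc.prems(1)] by simp
  next
    case True
    obtain u where u: "u \<le> Suc s" "r ((upstream n ^^ u) j) \<noteq> 0" using Suc.prems(2) by blast
    with True obtain u' where "u = Suc u'" by (cases u) auto
    then have "u' \<le> s \<and> r ((upstream n ^^ u') (upstream n j)) \<noteq> 0"
      using u by (simp add: funpow_Suc_right del: funpow.simps)
    then have "V s (upstream n j) = x (upstream n j)"
      using Suc.IH upstream_range[OF Suc.prems(1)] by blast
    then have "x j = max (c j) (t j + V s (upstream n j))" using x_fix[OF Suc.prems(1)] True by simp
    also have "\<dots> \<le> max (V s j) (t j + V s (upstream n j))"
      using iterate_ge_start[OF Suc.prems(1)] by (rule max.mono) simp
    also have "\<dots> = V (Suc s) j" using iterate_step[OF Suc.prems(1)] True by simp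
    finally show ?thesis .
  qed
  then show ?case using iterate_le_fixpoint[OF Suc.prems(1), of "Suc s"] by (rule antisym[rotated])
qed

end

text \<open>The coefficient matrices C_1 = E + G_1^T and C_m = G_m^T (m \<ge> 2), so that
  T_m(k) = P(k) D(k) C_m.\<close>
definition tandem_C :: "nat \<Rightarrow> (nat \<Rightarrow> nat) \<Rightarrow> nat \<Rightarrow> mpmat" where
  "tandem_C n r m = (if m = 1 then mp_add mp_id (mp_transpose (tandem_G n r 1))
                     else mp_transpose (tandem_G n r m))"

lemma mv_tandem_C:
  assumes "j \<in> {1..n}" "\<forall>l\<in>{1..n}. w l \<noteq> \<infinity>"
  shows "mp_mv n (tandem_C n r m) w j =
    (if m = 1 then max (w j) (if r j = 1 then w (upstream n j) else -\<infinity>)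
     else if r j = m then w (upstream n j) else -\<infinity>)"
  using assms by (simp add: tandem_C_def mv_add mv_id mv_G_transpose)

lemma tandem_C_sum:
  assumes j: "j \<in> {1..n}" and M: "1 \<le> M" "\<forall>j\<in>{1..n}. r j \<le> M"
    and y_fin: "\<forall>m. \<forall>l\<in>{1..n}. y m l \<noteq> \<infinity>"
  shows "(SUP m\<in>{1..M}. mp_mv n (tandem_C n r m) (y m) j) =
    max (y 1 j) (if r j = 0 then -\<infinity> else y (r j) (upstream n j))"
proof (rule antisym)
  show "(SUP m\<in>{1..M}. mp_mv n (tandem_C n r m) (y m) j)
      \<le> max (y 1 j) (if r j = 0 then -\<infinity> else y (r j) (upstream n j))"
    using j y_fin by (intro SUP_least) (auto simp: mv_tandem_C le_max_iff_disj)
  have "y 1 j \<le> (SUP m\<in>{1..M}. mp_mv n (tandem_C n r m) (y m) j)"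
    using j y_fin M by (intro SUP_upper2[of 1]) (auto simp: mv_tandem_C)
  moreover have "y (r j) (upstream n j) \<le> (SUP m\<in>{1..M}. mp_mv n (tandem_C n r m) (y m) j)"
    if "r j \<noteq> 0"
    using j y_fin M that by (intro SUP_upper2[of "r j"]) (auto simp: mv_tandem_C)
  ultimately show "max (y 1 j) (if r j = 0 then -\<infinity> else y (r j) (upstream n j))
      \<le> (SUP m\<in>{1..M}. mp_mv n (tandem_C n r m) (y m) j)"
    by auto
qed

lemma mv_service_step:
  assumes j: "j \<in> {1..n}" and w: "\<forall>l\<in>{1..n}. w l \<noteq> \<infinity>"
  shows "mp_mv n (mp_add mp_id (mp_mult n (mp_diag (\<lambda>i. ereal (v i))) (mp_transpose (tandem_G n r 0)))) w j =
    max (w j) (if r j = 0 then ereal (v j) + w (upstream n j) else -\<infinity>)"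
proof -
  have n: "n \<ge> 1" using j by simp
  have "\<forall>l\<in>{1..n}. mp_mv n (mp_transpose (tandem_G n r 0)) w l \<noteq> \<infinity>"
    using w upstream_range by (simp add: mv_G_transpose)
  then show ?thesis
    using j w by (simp add: mv_add mv_id mv_mult[OF n] mv_diag mv_G_transpose)
qed

text \<open>The core of the theorem for a single time step: if the vectors y(m) = d(k - m)
  obey the tandem recursion at lag 0, then y(0) = sup_m P D C_m y(m).\<close>
lemma tandem_lag_form:
  fixes n M :: nat and r :: "nat \<Rightarrow> nat" and v :: "nat \<Rightarrow> real" and y :: "nat \<Rightarrow> nat \<Rightarrow> ereal"
  defines "D \<equiv> mp_diag (\<lambda>i. ereal (v i))"
  defines "P \<equiv> mp_pow n (mp_add mp_id (mp_mult n D (mp_transpose (tandem_G n r 0))))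
                  (longest_path_len (zero_graph n r))"
  assumes n: "n \<ge> 1" and r_nz: "\<exists>i\<in>{1..n}. r i \<noteq> 0"
    and M: "1 \<le> M" "\<forall>j\<in>{1..n}. r j \<le> M"
    and y_fin: "\<forall>m. \<forall>l\<in>{1..n}. y m l \<noteq> \<infinity>"
    and y_rec: "\<And>j. j \<in> {1..n} \<Longrightarrow>
      y 0 j = max (ereal (v j) + y (r j) (upstream n j)) (ereal (v j) + y 1 j)"
    and i: "i \<in> {1..n}"
  shows "y 0 i = (SUP m\<in>{1..M}. mp_mv n (mp_mult n (mp_mult n P D) (tandem_C n r m)) (y m) i)"
proof -
  define c where "c j = ereal (v j) + max (y 1 j) (if r j = 0 then -\<infinity> else y (r j) (upstream n j))" for j
  define V where "V s = mp_mv n (mp_pow n (mp_add mp_id (mp_mult n D (mp_transpose (tandem_G n r 0)))) s) c"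
    for s
  have y0_fix: "y 0 j = max (c j) (if r j = 0 then ereal (v j) + y 0 (upstream n j) else -\<infinity>)"
    if "j \<in> {1..n}" for j
    using y_rec[OF that] by (auto simp: c_def add_max_ereal max.commute)
  have c_fin: "\<forall>j\<in>{1..n}. c j \<noteq> \<infinity>"
    using y_fin upstream_range by (auto simp: c_def max_def)
  have V_0: "V 0 j = c j" if "j \<in> {1..n}" for j
    using that c_fin by (simp add: V_def mv_id)
  have V_Suc: "V (Suc s) j = max (V s j) (if r j = 0 then ereal (v j) + V s (upstream n j) else -\<infinity>)"
    if "\<And>l. l \<in> {1..n} \<Longrightarrow> V s l \<noteq> \<infinity>" "j \<in> {1..n}" for s j
    using that by (simp add: V_def D_def mv_mult[OF n] mv_service_step)
  have fixpoint: "V (longest_path_len (zero_graph n r)) i = y 0 i"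
    using iterate_exact[where t = "\<lambda>j. ereal (v j)" and x = "y 0", OF y0_fix _ V_0 V_Suc i
        zero_chain_bounded[OF n r_nz i]] y_fin by blast
  have C_fin: "\<forall>l\<in>{1..n}. mp_mv n (tandem_C n r m) (y m) l \<noteq> \<infinity>" for m
    using y_fin upstream_range by (auto simp: mv_tandem_C max_def)
  have T_apply: "mp_mv n (mp_mult n (mp_mult n P D) (tandem_C n r m)) (y m) i
      = mp_mv n P (\<lambda>j. ereal (v j) + mp_mv n (tandem_C n r m) (y m) j) i" for m
  proof -
    have "mp_mv n (mp_mult n (mp_mult n P D) (tandem_C n r m)) (y m) i
        = mp_mv n P (mp_mv n D (mp_mv n (tandem_C n r m) (y m))) i"
      by (simp add: mv_mult[OF n])
    also have "\<dots> = mp_mv n P (\<lambda>j. ereal (v j) + mp_mv n (tandem_C n r m) (y m) j) i"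
      using C_fin by (intro mv_cong) (simp add: D_def mv_diag)
    finally show ?thesis .
  qed
  have "(SUP m\<in>{1..M}. mp_mv n (mp_mult n (mp_mult n P D) (tandem_C n r m)) (y m) i)
      = (SUP m\<in>{1..M}. mp_mv n P (\<lambda>j. ereal (v j) + mp_mv n (tandem_C n r m) (y m) j) i)"
    by (simp only: T_apply)
  also have "\<dots> = mp_mv n P (\<lambda>j. SUP m\<in>{1..M}. ereal (v j) + mp_mv n (tandem_C n r m) (y m) j) i"
    using M by (intro mv_SUP[OF n]) auto
  also have "\<dots> = mp_mv n P c i"
  proof (rule mv_cong)
    fix l assume l: "l \<in> {1..n}"
    have "(SUP m\<in>{1..M}. ereal (v l) + mp_mv n (tandem_C n r m) (y m) l)
        = ereal (v l) + (SUP m\<in>{1..M}. mp_mv n (tandem_C n r m) (y m) l)"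
      by (rule add_SUP_finite[symmetric]) (use M in auto)
    also have "\<dots> = c l" unfolding c_def using tandem_C_sum[OF l M y_fin] by simp
    finally show "(SUP m\<in>{1..M}. ereal (v l) + mp_mv n (tandem_C n r m) (y m) l) = c l" .
  qed
  also have "\<dots> = y 0 i" using fixpoint by (simp add: V_def P_def)
  finally show ?thesis ..
qed

theorem mainTheorem3:
  fixes n :: nat and r :: "nat \<Rightarrow> nat" and \<tau> :: "nat \<Rightarrow> int \<Rightarrow> real"
    and d :: "nat \<Rightarrow> int \<Rightarrow> ereal"
  assumes n_pos: "n \<ge> 1"
    and r_nz: "\<exists>i\<in>{1..n}. r i \<noteq> 0"
    and tau_pos: "\<And>i k. i \<in> {1..n} \<Longrightarrow> k \<ge> 1 \<Longrightarrow> \<tau> i k > 0"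
    and d_fin: "\<And>i k. i \<in> {1..n} \<Longrightarrow> d i k \<noteq> \<infinity>"
    and d_zero: "\<And>i. i \<in> {1..n} \<Longrightarrow> d i 0 = 0"
    and d_neg: "\<And>i k. i \<in> {1..n} \<Longrightarrow> k < 0 \<Longrightarrow> d i k = -\<infinity>"
    and rec1: "\<And>k. k \<ge> 1 \<Longrightarrow>
        d 1 k = max (ereal (\<tau> 1 k) + d n (k - int (r 1))) (ereal (\<tau> 1 k) + d 1 (k - 1))"
    and rec: "\<And>i k. i \<in> {2..n} \<Longrightarrow> k \<ge> 1 \<Longrightarrow>
        d i k = max (ereal (\<tau> i k) + d (i - 1) (k - int (r i))) (ereal (\<tau> i k) + d i (k - 1))"
  shows "acyclic (mp_graph n (tandem_G n r 0)) \<and>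
    (let M = Max (r ` {1..n});
         p = longest_path_len (mp_graph n (tandem_G n r 0));
         Tk = (\<lambda>k. mp_diag (\<lambda>i. ereal (\<tau> i k)));
         P = (\<lambda>k. mp_pow n (mp_add mp_id (mp_mult n (Tk k) (mp_transpose (tandem_G n r 0)))) p);
         T = (\<lambda>m k. if m = 1
                  then mp_mult n (mp_mult n (P k) (Tk k)) (mp_add mp_id (mp_transpose (tandem_G n r 1)))
                  else mp_mult n (mp_mult n (P k) (Tk k)) (mp_transpose (tandem_G n r m)))
     in \<forall>k\<ge>1. \<forall>i\<in>{1..n}.
          d i k = (SUP m\<in>{1..M}. mp_mv n (T m k) (\<lambda>j. d j (k - int m)) i))"
proof -
  let ?M = "Max (r ` {1..n})"
  let ?D = "\<lambda>k. mp_diag (\<lambda>i. ereal (\<tau> i k))"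
  let ?P = "\<lambda>k. mp_pow n (mp_add mp_id (mp_mult n (?D k) (mp_transpose (tandem_G n r 0))))
                 (longest_path_len (zero_graph n r))"
  have M_ub: "\<forall>j\<in>{1..n}. r j \<le> ?M" by simp
  have M_pos: "1 \<le> ?M" using M_ub r_nz by (metis One_nat_def less_one not_le order.trans)
  have d_rec: "d j k = max (ereal (\<tau> j k) + d (upstream n j) (k - int (r j))) (ereal (\<tau> j k) + d j (k - 1))"
    if "j \<in> {1..n}" "k \<ge> 1" for j k
    using rec1[OF that(2)] rec[of j k] that by (cases "j = 1") (auto simp: upstream_def)
  have "d i k = (SUP m\<in>{1..?M}. mp_mv n (mp_mult n (mp_mult n (?P k) (?D k)) (tandem_C n r m))
                   (\<lambda>j. d j (k - int m)) i)"
    if "k \<ge> 1" "i \<in> {1..n}" for k i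
    using tandem_lag_form[of n r ?M "\<lambda>m l. d l (k - int m)" "\<lambda>j. \<tau> j k", OF n_pos r_nz M_pos M_ub]
      d_fin d_rec[OF _ that(1)] that(2) by simp
  then show ?thesis
    using zero_graph_acyclic[OF n_pos r_nz] by (simp add: Let_def tandem_C_def if_distrib)
qed

end
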